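(* Let $S$ be as in the context and $1\le k<n$. Let $p_1,\dots,p_r$ be pairwise node-disjoint sequences $p_l=(x_{l,1},\dots,x_{l,w_l})$, $w_l\ge2$, of pairwise distinct nodes of $G_k(S)$ such that for every $1\le t<w_l$, $x_{l,t+1}$ is the only successor of $x_{l,t}$ and $x_{l,t}$ is the only predecessor of $x_{l,t+1}$, and suppose that every fusible edge of $G_k(S)$ is of the form $(x_{l,t},x_{l,t+1})$ for some $l$ and $t$. Let $[i_l,j_l]$ be the $x_{l,w_l}$-interval, so that $\langle w_l-1,[i_l,j_l]\rangle$ is a prefix interval. Let $L'$ be the string obtained from $L$ by deleting every entry at a position of the form $\mathrm{LF}^t[y]$ with $1\le l\le r$, $i_l<y\le j_l$ and $0\le t<w_l-1$ (i.e. the $L$-component of the tunneled BWT obtained by tunneling these prefix intervals). Then $|L'|=m_k$, the number of edges of the edge-reduced de Bruijn graph $\tilde G_k(S)$ counted with multiplicity.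
   Context: $\Sigma$ is a finite totally ordered alphabet containing a symbol $\$$ smaller than every other symbol. $S$ is a string of length $n\ge 2$ over $\Sigma$ whose last character is $\$$ and in which $\$$ occurs nowhere else; strings are indexed from $1$. The rotations of $S$ are the $n$ strings $S[i..n]S[1..i-1]$, $i\in[1,n]$. For $1\le k\le n$ let $Z_k(S)=S[1..n]S[1..k]$. The order-$k$ de Bruijn graph $G_k(S)$ is the directed multigraph with node set $\{Z_k(S)[i..i+k-1]: i\in[1,n]\}$ that, for every $z\in\Sigma^{k+1}$ occurring exactly $m\ge1$ times as a substring of $Z_k(S)$, contains the edge $(z[1..k],z[2..k+1])$ with multiplicity $m$. $x$ is a predecessor of $y$ (and $y$ a successor of $x$) if there is an edge $(x,y)$ of positive multiplicity. An edge $(x,y)$ is fusible if $y$ is the only successor of $x$ and $x$ is the only predecessor of $y$. The edge-reduced de Bruijn graph $\tilde G_k(S)$ is obtained from $G_k(S)$ by setting the multiplicity of every fusible edge to $1$. Let $M$ be the $n\times n$ matrix whose rows (indexed $1,\dots,n$) are the rotations of $S$ sorted lexicographically, and let $L[i]$ be the last character of row $i$ (the BWT of $S$). For $c\in\Sigma$, $C[c]$ is the number of characters of $S$ strictly smaller than $c$, and $\mathrm{rank}_c(L,i)$ is the number of occurrences of $c$ in $L[1..i]$. The LF-mapping is $\mathrm{LF}[i]=C[L[i]]+\mathrm{rank}_{L[i]}(L,i)$, a permutation of $[1,n]$; $\mathrm{LF}^t$ is its $t$-fold iterate ($\mathrm{LF}^0$ the identity) and $\mathrm{LF}^{-1}$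 its inverse. For a string $x$ that is a prefix of some rotation, the $x$-interval is the set of indices of rows of $M$ that begin with $x$ (an interval $[i,j]$). A prefix interval $\langle w,[i,j]\rangle$ consists of an integer $w\ge0$ and an interval $[i,j]\subseteq[1,n]$ such that for every integer $t$ with $-1\le t<w$ the characters $L[\mathrm{LF}^t[i]],\dots,L[\mathrm{LF}^t[j]]$ are all equal. *)

theory Defs
  imports Main "HOL-Library.List_Lexorder"
begin

(* Conventions: strings are Isabelle lists, hence indexed from 0 (paper position i
   corresponds to list index i-1; row i of M corresponds to index i-1). *)

definition rot :: "'a list \<Rightarrow> nat \<Rightarrow> 'a list" where
  "rot S i = drop i S @ take i S"

definition BWM :: "'a::linorder list \<Rightarrow> 'a list list" where
  "BWM S = sort (map (rot S) [0..<length S])"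

definition BWT :: "'a::linorder list \<Rightarrow> nat \<Rightarrow> 'a" where
  "BWT S i = last (BWM S ! i)"

definition Ccount :: "'a::linorder list \<Rightarrow> 'a \<Rightarrow> nat" where
  "Ccount S c = length (filter (\<lambda>x. x < c) S)"

definition rankL :: "'a::linorder list \<Rightarrow> 'a \<Rightarrow> nat \<Rightarrow> nat" where
  "rankL S c i = length (filter (\<lambda>x. x = c) (take (Suc i) (map (BWT S) [0..<length S])))"

definition LF :: "'a::linorder list \<Rightarrow> nat \<Rightarrow> nat" where
  "LF S i = Ccount S (BWT S i) + rankL S (BWT S i) i - 1"

definition xint :: "'a::linorder list \<Rightarrow> 'a list \<Rightarrow> nat set" where
  "xint S x = {i. i < length S \<and> take (length x) (BWM S ! i) = x}"

definition Zk :: "'a list \<Rightarrow> nat \<Rightarrow> 'a list" where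
  "Zk S k = S @ take k S"

definition occ :: "'a list \<Rightarrow> nat \<Rightarrow> 'a list \<Rightarrow> nat" where
  "occ S k z = card {i. i + length z \<le> length (Zk S k) \<and> take (length z) (drop i (Zk S k)) = z}"

definition dbg_nodes :: "'a list \<Rightarrow> nat \<Rightarrow> 'a list set" where
  "dbg_nodes S k = {take k (drop i (Zk S k)) | i. i < length S}"

(* edges of G_k(S) are identified with the (k+1)-substrings z of Z_k(S);
   z gives the edge (z[1..k], z[2..k+1]) with multiplicity occ S k z *)
definition dbg_edges :: "'a list \<Rightarrow> nat \<Rightarrow> 'a list set" where
  "dbg_edges S k = {z. length z = Suc k \<and> occ S k z \<ge> 1}"

definition is_edge :: "'a list \<Rightarrow> nat \<Rightarrow> 'a list \<Rightarrow> 'a list \<Rightarrow> bool" where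
  "is_edge S k x y = (\<exists>z\<in>dbg_edges S k. take k z = x \<and> drop 1 z = y)"

definition fusible :: "'a list \<Rightarrow> nat \<Rightarrow> 'a list \<Rightarrow> bool" where
  "fusible S k z = (z \<in> dbg_edges S k
     \<and> (\<forall>y. is_edge S k (take k z) y \<longrightarrow> y = drop 1 z)
     \<and> (\<forall>x. is_edge S k x (drop 1 z) \<longrightarrow> x = take k z))"

definition m_red :: "'a list \<Rightarrow> nat \<Rightarrow> nat" where
  "m_red S k = (\<Sum>z\<in>dbg_edges S k. if fusible S k z then 1 else occ S k z)"

end

(* Since the sentinel occurs only once, the n rotations of S are pairwise distinct, so M lists
   each of them once and LF sends the row of rotate1 \<rho> to the row of \<rho>. An edge z of G_k(S)
   has multiplicity occ z = number of rotations with (k+1)-prefix z; hence the multiplicities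
   sum to n and m_k = n - \<Sum> (occ z - 1) over the fusible edges z.
   Along a unary path the x-intervals of consecutive nodes have equal size: by uniqueness of
   predecessors LF maps the interval of x_{t+1} injectively into that of x_t, and by uniqueness
   of successors rotate1 maps the rotations with prefix x_t injectively to those with prefix
   x_{t+1}. So every fusible edge (x_{l,t}, x_{l,t+1}) has multiplicity j_l - i_l + 1, and
   tunneling deletes for it the j_l - i_l LF-images of (i_l, j_l] that lie in the interval of
   x_{l,t+1}; blocks belonging to distinct nodes are disjoint. *)

theory Submission
  imports Defs
begin

lemma sorted_distinct_nth_less_iff:
  fixes xs :: "'b::linorder list"
  assumes "sorted xs" "distinct xs" "i < length xs" "j < length xs"
  shows "xs ! j < xs ! i \<longleftrightarrow> j < i"
proof
  assume "xs ! j < xs ! i"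
  then show "j < i" using assms by (metis leD linorder_not_le sorted_nth_mono)
next
  assume "j < i"
  then show "xs ! j < xs ! i"
    using assms by (metis less_imp_le nat_neq_iff nth_eq_iff_index_eq order_le_neq_trans sorted_nth_mono)
qed

lemma card_less_sorted_distinct_nth:
  fixes xs :: "'b::linorder list"
  assumes "sorted xs" "distinct xs" "i < length xs"
  shows "card {x \<in> set xs. x < xs ! i} = i"
proof -
  have "{x \<in> set xs. x < xs ! i} = (!) xs ` {..<i}"
    using assms sorted_distinct_nth_less_iff[OF assms]
    by (auto simp: in_set_conv_nth image_iff) (metis less_trans)
  moreover have "inj_on ((!) xs) {..<i}"
    using assms by (auto simp: inj_on_def nth_eq_iff_index_eq)
  ultimately show ?thesis by (simp add: card_image)
qed

lemma append_single_less_iff: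
  fixes u v :: "'b::linorder list"
  shows "length u = length v \<Longrightarrow> u @ [c] < v @ [c] \<longleftrightarrow> u < v"
proof (induction u arbitrary: v)
  case (Cons a u v)
  then obtain b v' where "v = b # v'" "length u = length v'" by (cases v) auto
  with Cons show ?case by simp
qed simp

lemma eq_of_take_drop1:
  assumes "length z = Suc k" "length z' = Suc k" "1 \<le> k"
    and "take k z = take k z'" "drop 1 z = drop 1 z'"
  shows "z = z'"
proof (rule nth_equalityI)
  show "length z = length z'" using assms by simp
  fix i assume i: "i < length z"
  show "z ! i = z' ! i"
  proof (cases "i < k")
    case True
    then show ?thesis using assms(4) by (metis nth_take)
  next
    case False
    then have "z ! i = drop 1 z ! (i - 1)" "z' ! i = drop 1 z' ! (i - 1)"
      using i assms(1-3) by simp_all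
    then show ?thesis using assms(5) by simp
  qed
qed

lemma length_filter_upt_notin:
  "D \<subseteq> {..<n} \<Longrightarrow> length [f i. i \<leftarrow> [0..<n], i \<notin> D] = n - card D"
proof -
  assume D: "D \<subseteq> {..<n}"
  have "length [f i. i \<leftarrow> [0..<n], i \<notin> D] = length (filter (\<lambda>i. i \<notin> D) [0..<n])"
    by (induction n) auto
  also have "\<dots> = card ({..<n} - D)"
    unfolding length_filter_conv_card by (intro arg_cong[where f = card]) auto
  also have "\<dots> = n - card D"
    using D by (simp add: card_Diff_subset finite_subset)
  finally show ?thesis .
qed

locale sentinel_string =
  fixes S :: "'a::linorder list"
  assumes nonempty: "S \<noteq> []"
    and last_notin_butlast: "last S \<notin> set (butlast S)"
begin

abbreviation "n \<equiv> length S"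

definition rotations :: "'a list set" where
  "rotations = rot S ` {..<n}"

lemma rot_eq_rotate: "j < n \<Longrightarrow> rot S j = rotate j S"
  by (simp add: rot_def rotate_drop_take)

lemma inj_on_rot: "inj_on (rot S) {..<n}"
proof -
  have last_pos: "rotate j S ! (n - 1 - j) = last S" if "j < n" for j
    using that nonempty by (simp add: nth_rotate last_conv_nth)
  have "rotate j S \<noteq> rotate j' S" if "j < j'" "j' < n" for j j'
  proof -
    have "(j' + (n - 1 - j)) mod n = j' - j - 1"
      using that by (simp add: mod_if)
    then have "rotate j' S ! (n - 1 - j) = S ! (j' - j - 1)"
      using that by (simp add: nth_rotate)
    moreover have "S ! (j' - j - 1) \<noteq> last S"
    proof -
      have "j' - j - 1 < length (butlast S)" using that by simp
      then show ?thesis using last_notin_butlast by (metis nth_butlast nth_mem)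
    qed
    ultimately show ?thesis using last_pos[of j] that by (metis less_trans)
  qed
  then show ?thesis
    by (auto simp: inj_on_def rot_eq_rotate) (metis linorder_neqE_nat)
qed

lemma card_rotations: "card rotations = n"
  using inj_on_rot by (simp add: rotations_def card_image)

lemma finite_rotations: "finite rotations"
  by (simp add: rotations_def)

lemma rotations_iff: "x \<in> rotations \<longleftrightarrow> (\<exists>j<n. x = rotate j S)"
  by (auto simp: rotations_def rot_eq_rotate)

lemma length_rotation: "x \<in> rotations \<Longrightarrow> length x = n"
  by (auto simp: rotations_iff)

lemma rotate1_image_rotations: "rotate1 ` rotations = rotations"
proof (rule card_subset_eq[OF finite_rotations])
  have "rotate1 (rotate j S) \<in> rotations" if "j < n" for j
    unfolding rotations_iff
  proof (intro exI conjI)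
    show "Suc j mod n < n" using that by (intro mod_less_divisor) linarith
    show "rotate1 (rotate j S) = rotate (Suc j mod n) S"
      by (metis rotate_Suc rotate_conv_mod)
  qed
  then show "rotate1 ` rotations \<subseteq> rotations"
    by (auto simp: rotations_iff)
  show "card (rotate1 ` rotations) = card rotations"
    by (rule card_image) (meson inj_rotate1 inj_on_subset subset_UNIV)
qed

lemma hd_rot: "j < n \<Longrightarrow> hd (rot S j) = S ! j"
  by (simp add: rot_def hd_append hd_drop_conv_nth)

lemma rotate1_rotation: "x \<in> rotations \<Longrightarrow> rotate1 x = tl x @ [hd x]"
  using length_rotation nonempty by (intro rotate1_hd_tl) fastforce

lemma rotation_less_iff:
  assumes "x \<in> rotations" "y \<in> rotations"
  shows "x < y \<longleftrightarrow> hd x < hd y \<or> hd x = hd y \<and> tl x < tl y"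
proof -
  have "x = hd x # tl x" "y = hd y # tl y"
    using assms length_rotation nonempty by (metis hd_Cons_tl length_0_conv)+
  then show ?thesis by (metis Cons_less_Cons)
qed

lemma rotate1_less_rotate1_iff:
  assumes "x \<in> rotations" "y \<in> rotations" "hd x = hd y"
  shows "rotate1 x < rotate1 y \<longleftrightarrow> x < y"
  using assms length_rotation
  by (simp add: rotate1_rotation rotation_less_iff append_single_less_iff)

abbreviation "M \<equiv> BWM S"

lemma BWM_props: "sorted M" "distinct M" "set M = rotations" "length M = n"
proof -
  have "distinct (map (rot S) [0..<n])"
    using inj_on_rot by (simp add: distinct_map lessThan_atLeast0)
  then show "sorted M" "distinct M" "set M = rotations" "length M = n"
    by (simp_all add: BWM_def rotations_def lessThan_atLeast0)
qed

lemma BWM_nth_rotation: "i < n \<Longrightarrow> M ! i \<in> rotations"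
  using BWM_props by (metis nth_mem)

lemma card_less_BWM_nth: "i < n \<Longrightarrow> card {x \<in> rotations. x < M ! i} = i"
  using card_less_sorted_distinct_nth[of M i] BWM_props by simp

lemma BWM_nth_card_less:
  assumes "x \<in> rotations"
  shows "card {y \<in> rotations. y < x} < n" "M ! card {y \<in> rotations. y < x} = x"
proof -
  obtain i where "i < n" "x = M ! i"
    using assms BWM_props by (metis in_set_conv_nth)
  then show "card {y \<in> rotations. y < x} < n" "M ! card {y \<in> rotations. y < x} = x"
    using card_less_BWM_nth by simp_all
qed

lemma Ccount_eq_card_rotations: "Ccount S c = card {x \<in> rotations. hd x < c}"
proof -
  have "Ccount S c = card {j \<in> {..<n}. S ! j < c}"
    unfolding Ccount_def length_filter_conv_card by (rule arg_cong[where f = card]) auto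
  also have "\<dots> = card (rot S ` {j \<in> {..<n}. S ! j < c})"
    by (rule card_image[symmetric], rule inj_on_subset[OF inj_on_rot]) auto
  also have "rot S ` {j \<in> {..<n}. S ! j < c} = {x \<in> rotations. hd x < c}"
    unfolding rotations_def using hd_rot by auto
  finally show ?thesis .
qed

lemma rankL_BWT:
  assumes "i < n"
  shows "rankL S (BWT S i) i = Suc (card {y \<in> rotations. last y = BWT S i \<and> y < M ! i})"
proof -
  define c where "c = BWT S i"
  have "rankL S c i = length (filter (\<lambda>x. x = c) (map (BWT S) [0..<Suc i]))"
    unfolding rankL_def using assms by (simp add: take_map)
  also have "\<dots> = card {j. j \<le> i \<and> last (M ! j) = c}"
    unfolding length_filter_conv_card
    by (intro arg_cong[where f = card]) (auto simp: BWT_def less_Suc_eq_le simp del: upt_Suc)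
  also have "\<dots> = card ((!) M ` {j. j \<le> i \<and> last (M ! j) = c})"
    using assms BWM_props by (intro card_image[symmetric]) (auto simp: inj_on_def nth_eq_iff_index_eq)
  also have "(!) M ` {j. j \<le> i \<and> last (M ! j) = c}
      = insert (M ! i) {y \<in> rotations. last y = c \<and> y < M ! i}"
  proof -
    have "y \<in> (!) M ` {j. j < i \<and> last (M ! j) = c} \<longleftrightarrow> y \<in> rotations \<and> last y = c \<and> y < M ! i" for y
    proof
      assume "y \<in> (!) M ` {j. j < i \<and> last (M ! j) = c}"
      then obtain j where "j < i" "last (M ! j) = c" "y = M ! j" by blast
      then show "y \<in> rotations \<and> last y = c \<and> y < M ! i"
        using assms BWM_props sorted_distinct_nth_less_iff[of M i j] BWM_nth_rotation[of j] by simp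
    next
      assume y: "y \<in> rotations \<and> last y = c \<and> y < M ! i"
      then obtain j where "j < n" "y = M ! j"
        using BWM_props by (metis in_set_conv_nth)
      then show "y \<in> (!) M ` {j. j < i \<and> last (M ! j) = c}"
        using y assms BWM_props sorted_distinct_nth_less_iff[of M i j] by auto
    qed
    then show ?thesis
      by (auto simp: c_def BWT_def le_less)
  qed
  also have "card \<dots> = Suc (card {y \<in> rotations. last y = c \<and> y < M ! i})"
    using finite_rotations by simp
  finally show ?thesis by (simp add: c_def)
qed

(* Writing row i as rotate1 \<rho> with c = hd \<rho> = L[i], the rotations below \<rho> are those
   starting with a symbol < c (counted by C[c]) and those starting with c and smaller than \<rho>;
   rotate1 maps the latter bijectively onto the rows above row i that end with c. *)
lemma LF_correct:
  assumes "i < n"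
  shows "LF S i < n" "rotate1 (M ! LF S i) = M ! i"
proof -
  obtain \<rho> where \<rho>: "\<rho> \<in> rotations" "rotate1 \<rho> = M ! i"
    using BWM_nth_rotation[OF assms] rotate1_image_rotations by (metis imageE)
  define c where "c = hd \<rho>"
  have c_BWT: "BWT S i = c"
    using \<rho> by (metis BWT_def c_def last_snoc rotate1_rotation)
  have smaller_split: "{x \<in> rotations. x < \<rho>}
      = {x \<in> rotations. hd x < c} \<union> {x \<in> rotations. hd x = c \<and> x < \<rho>}"
    using \<rho>(1) rotation_less_iff c_def by auto
  have "{x \<in> rotations. last (rotate1 x) = c \<and> rotate1 x < rotate1 \<rho>}
      = {x \<in> rotations. hd x = c \<and> x < \<rho>}"
    using \<rho>(1) rotate1_less_rotate1_iff c_def by (auto simp: rotate1_rotation)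
  then have image_eq: "rotate1 ` {x \<in> rotations. hd x = c \<and> x < \<rho>}
      = {y \<in> rotate1 ` rotations. last y = c \<and> y < rotate1 \<rho>}"
    by blast
  have "card {x \<in> rotations. hd x = c \<and> x < \<rho>}
      = card (rotate1 ` {x \<in> rotations. hd x = c \<and> x < \<rho>})"
    by (rule card_image[symmetric]) (meson inj_rotate1 inj_on_subset subset_UNIV)
  also have "\<dots> = card {y \<in> rotations. last y = c \<and> y < M ! i}"
    unfolding image_eq rotate1_image_rotations \<rho>(2) ..
  also have "\<dots> = rankL S c i - 1"
    using rankL_BWT[OF assms] by (simp add: c_BWT)
  finally have "card {x \<in> rotations. x < \<rho>} = Ccount S c + (rankL S c i - 1)"
    unfolding smaller_split Ccount_eq_card_rotations using finite_rotations
    by (subst card_Un_disjoint) auto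
  moreover have "rankL S c i \<ge> 1"
    using rankL_BWT[OF assms] by (simp add: c_BWT)
  ultimately have "LF S i = card {x \<in> rotations. x < \<rho>}"
    by (simp add: LF_def c_BWT)
  then show "LF S i < n" "rotate1 (M ! LF S i) = M ! i"
    using BWM_nth_card_less[OF \<rho>(1)] \<rho>(2) by simp_all
qed

lemma inj_on_LF: "inj_on (LF S) {..<n}"
proof (rule inj_onI)
  fix a b assume ab: "a \<in> {..<n}" "b \<in> {..<n}" "LF S a = LF S b"
  then have "M ! a = M ! b"
    using LF_correct(2)[of a] LF_correct(2)[of b] by simp
  then show "a = b"
    using ab BWM_props by (simp add: nth_eq_iff_index_eq)
qed

lemma LF_funpow: "inj_on (LF S ^^ t) {..<n} \<and> (LF S ^^ t) ` {..<n} \<subseteq> {..<n}"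
proof (induction t)
  case (Suc t)
  have LF_maps: "LF S ` {..<n} \<subseteq> {..<n}"
    using LF_correct by auto
  have "inj_on ((LF S ^^ t) \<circ> LF S) {..<n}"
    using comp_inj_on[OF inj_on_LF inj_on_subset[OF conjunct1[OF Suc.IH] LF_maps]] .
  moreover have "((LF S ^^ t) \<circ> LF S) ` {..<n} \<subseteq> {..<n}"
    using Suc.IH LF_maps by (auto simp: image_comp[symmetric])
  ultimately show ?case
    by (simp only: funpow_Suc_right)
qed simp

lemma xint_disjoint: "length x = length y \<Longrightarrow> x \<noteq> y \<Longrightarrow> xint S x \<inter> xint S y = {}"
  by (auto simp: xint_def)

lemma xint_subset: "xint S x \<subseteq> {..<n}"
  by (auto simp: xint_def)

lemma card_xint: "card (xint S x) = card {y \<in> rotations. take (length x) y = x}"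
proof -
  have "(!) M ` xint S x = {y \<in> rotations. take (length x) y = x}"
  proof
    show "(!) M ` xint S x \<subseteq> {y \<in> rotations. take (length x) y = x}"
      using BWM_nth_rotation by (auto simp: xint_def)
    show "{y \<in> rotations. take (length x) y = x} \<subseteq> (!) M ` xint S x"
    proof
      fix y assume y: "y \<in> {y \<in> rotations. take (length x) y = x}"
      then obtain i where "i < n" "y = M ! i"
        using BWM_props by (metis (no_types, lifting) in_set_conv_nth mem_Collect_eq)
      then show "y \<in> (!) M ` xint S x"
        using y by (auto simp: xint_def)
    qed
  qed
  moreover have "inj_on ((!) M) (xint S x)"
    using BWM_props by (auto simp: xint_def inj_on_def nth_eq_iff_index_eq)
  ultimately show ?thesis by (metis card_image)
qed

end

locale de_bruijn = sentinel_string +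
  fixes k :: nat
  assumes k_ge_1: "1 \<le> k" and k_less: "k < n"
begin

lemma take_drop_Zk: "j < n \<Longrightarrow> m \<le> Suc k \<Longrightarrow> take m (drop j (Zk S k)) = take m (rot S j)"
proof -
  assume j: "j < n" and m: "m \<le> Suc k"
  have "m - (n - j) \<le> k" "m - (n - j) \<le> j"
    using j m k_less by arith+
  then show ?thesis
    using j by (simp add: Zk_def rot_def take_take min_absorb1)
qed

lemma occ_eq_card: "length z = Suc k \<Longrightarrow> occ S k z = card {x \<in> rotations. take (Suc k) x = z}"
proof -
  assume z: "length z = Suc k"
  have "{i. i + length z \<le> length (Zk S k) \<and> take (length z) (drop i (Zk S k)) = z}
      = {i \<in> {..<n}. take (Suc k) (rot S i) = z}"
  proof -
    have "length (Zk S k) = n + k"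
      using k_less by (simp add: Zk_def)
    then show ?thesis
      using z take_drop_Zk by auto
  qed
  then have "occ S k z = card {i \<in> {..<n}. take (Suc k) (rot S i) = z}"
    by (simp add: occ_def)
  also have "\<dots> = card (rot S ` {i \<in> {..<n}. take (Suc k) (rot S i) = z})"
    by (rule card_image[symmetric], rule inj_on_subset[OF inj_on_rot]) auto
  also have "rot S ` {i \<in> {..<n}. take (Suc k) (rot S i) = z} = {x \<in> rotations. take (Suc k) x = z}"
    by (auto simp: rotations_def)
  finally show ?thesis .
qed

lemma dbg_edges_eq: "dbg_edges S k = take (Suc k) ` rotations"
proof -
  have "z \<in> dbg_edges S k \<longleftrightarrow> length z = Suc k \<and> {x \<in> rotations. take (Suc k) x = z} \<noteq> {}" for z
    using finite_rotations by (auto simp: dbg_edges_def occ_eq_card Suc_le_eq card_gt_0_iff)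
  then show ?thesis
    using length_rotation k_less by auto
qed

lemma dbg_nodes_eq: "dbg_nodes S k = take k ` rotations"
proof -
  have "dbg_nodes S k = (\<lambda>j. take k (drop j (Zk S k))) ` {..<n}"
    by (auto simp: dbg_nodes_def)
  also have "\<dots> = (\<lambda>j. take k (rot S j)) ` {..<n}"
    using take_drop_Zk[of _ k] by simp
  finally have "dbg_nodes S k = (\<lambda>j. take k (rot S j)) ` {..<n}" .
  then show ?thesis
    by (auto simp: rotations_def)
qed

lemma drop1_take_Suc: "x \<in> rotations \<Longrightarrow> drop 1 (take (Suc k) x) = take k (rotate1 x)"
  using length_rotation k_less
  by (simp add: rotate1_rotation drop_take tl_take[symmetric] drop_Suc)

lemma is_edge_iff: "is_edge S k a b \<longleftrightarrow> (\<exists>x \<in> rotations. a = take k x \<and> b = take k (rotate1 x))"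
  unfolding is_edge_def dbg_edges_eq using drop1_take_Suc by (auto simp: min_def)

lemma sum_occ: "(\<Sum>z \<in> dbg_edges S k. occ S k z) = n"
proof -
  have "(\<Sum>z \<in> dbg_edges S k. occ S k z)
      = (\<Sum>z \<in> take (Suc k) ` rotations. card {x \<in> rotations. take (Suc k) x = z})"
    using length_rotation k_less by (intro sum.cong) (auto simp: dbg_edges_eq occ_eq_card)
  also have "\<dots> = card rotations"
    using card_eq_sum sum.image_gen[OF finite_rotations, of "\<lambda>_. 1 :: nat" "take (Suc k)"]
    by simp
  finally show ?thesis by (simp add: card_rotations)
qed

lemma m_red_add_fusible_excess:
  "m_red S k + (\<Sum>z \<in> {z \<in> dbg_edges S k. fusible S k z}. occ S k z - 1) = n"
proof -
  have "finite (dbg_edges S k)"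
    using finite_rotations by (simp add: dbg_edges_eq)
  then have "(\<Sum>z \<in> {z \<in> dbg_edges S k. fusible S k z}. occ S k z - 1)
      = (\<Sum>z \<in> dbg_edges S k. if fusible S k z then occ S k z - 1 else 0)"
    by (rule sum.inter_filter)
  then have "m_red S k + (\<Sum>z \<in> {z \<in> dbg_edges S k. fusible S k z}. occ S k z - 1)
      = (\<Sum>z \<in> dbg_edges S k. (if fusible S k z then 1 else occ S k z)
                              + (if fusible S k z then occ S k z - 1 else 0))"
    by (simp only: m_red_def sum.distrib)
  also have "\<dots> = (\<Sum>z \<in> dbg_edges S k. occ S k z)"
    by (rule sum.cong) (auto simp: dbg_edges_def)
  finally show ?thesis by (simp add: sum_occ)
qed

lemma length_is_edge: "is_edge S k x y \<Longrightarrow> length x = k \<and> length y = k"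
  using length_rotation k_less by (auto simp: is_edge_iff)

lemma LF_image_xint_unique_pred:
  assumes "length y = k" "\<forall>x'. is_edge S k x' y \<longrightarrow> x' = x"
  shows "LF S ` xint S y \<subseteq> xint S x"
proof
  fix j assume "j \<in> LF S ` xint S y"
  then obtain i where i: "i < n" "take k (M ! i) = y" "j = LF S i"
    using assms(1) by (auto simp: xint_def)
  have edge: "is_edge S k (take k (M ! j)) y"
    unfolding is_edge_iff using i LF_correct[OF i(1)] BWM_nth_rotation by auto
  then have "take k (M ! j) = x"
    using assms(2) by blast
  moreover have "length x = k"
    using edge length_is_edge calculation by blast
  ultimately show "j \<in> xint S x"
    using i LF_correct[OF i(1)] by (simp add: xint_def)
qed

lemma rotate1_image_prefix_unique_succ:
  assumes "\<forall>y'. is_edge S k x y' \<longrightarrow> y' = y"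
  shows "rotate1 ` {\<rho> \<in> rotations. take k \<rho> = x} \<subseteq> {\<rho> \<in> rotations. take k \<rho> = y}"
  using assms rotate1_image_rotations by (auto simp: is_edge_iff)

(* LF injects the y-interval into the x-interval, and rotate1 injects the rotations with
   prefix x into those with prefix y. *)
lemma card_xint_unique_edge:
  assumes "{y'. is_edge S k x y'} = {y}" "{x'. is_edge S k x' y} = {x}"
  shows "card (xint S x) = card (xint S y)"
proof -
  have lengths: "length x = k" "length y = k"
    using assms(1) length_is_edge by blast+
  have "card (xint S y) \<le> card (xint S x)"
  proof (rule card_inj_on_le)
    show "inj_on (LF S) (xint S y)"
      by (rule inj_on_subset[OF inj_on_LF]) (auto simp: xint_def)
    show "LF S ` xint S y \<subseteq> xint S x"
      using LF_image_xint_unique_pred lengths assms(2) by blast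
  qed (simp add: xint_def)
  moreover have "card {\<rho> \<in> rotations. take k \<rho> = x} \<le> card {\<rho> \<in> rotations. take k \<rho> = y}"
  proof (rule card_inj_on_le)
    show "inj_on rotate1 {\<rho> \<in> rotations. take k \<rho> = x}"
      by (meson inj_rotate1 inj_on_subset subset_UNIV)
    show "rotate1 ` {\<rho> \<in> rotations. take k \<rho> = x} \<subseteq> {\<rho> \<in> rotations. take k \<rho> = y}"
      using rotate1_image_prefix_unique_succ assms(1) by blast
  qed (simp add: finite_rotations)
  ultimately show ?thesis
    using card_xint[of x] card_xint[of y] lengths by simp
qed

lemma occ_unique_pred:
  assumes "z \<in> dbg_edges S k" "\<forall>x'. is_edge S k x' (drop 1 z) \<longrightarrow> x' = take k z"
  shows "occ S k z = card (xint S (drop 1 z))"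
proof -
  have z: "length z = Suc k"
    using assms(1) by (simp add: dbg_edges_def)
  have "rotate1 ` {x \<in> rotations. take (Suc k) x = z} = {y \<in> rotations. take k y = drop 1 z}"
  proof
    show "rotate1 ` {x \<in> rotations. take (Suc k) x = z} \<subseteq> {y \<in> rotations. take k y = drop 1 z}"
      using rotate1_image_rotations drop1_take_Suc by auto
    show "{y \<in> rotations. take k y = drop 1 z} \<subseteq> rotate1 ` {x \<in> rotations. take (Suc k) x = z}"
    proof
      fix y assume y: "y \<in> {y \<in> rotations. take k y = drop 1 z}"
      then obtain x where x: "x \<in> rotations" "rotate1 x = y"
        using rotate1_image_rotations by (metis (no_types, lifting) imageE mem_Collect_eq)
      then have "is_edge S k (take k x) (drop 1 z)"
        using y unfolding is_edge_iff by auto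
      then have "take k x = take k z"
        using assms(2) by blast
      moreover have "length (take (Suc k) x) = Suc k"
        using x(1) length_rotation k_less by simp
      ultimately have "take (Suc k) x = z"
        using y drop1_take_Suc[OF x(1)] x(2) by (intro eq_of_take_drop1[OF _ z k_ge_1]) simp_all
      then show "y \<in> rotate1 ` {x \<in> rotations. take (Suc k) x = z}"
        using x by auto
    qed
  qed
  moreover have "card (rotate1 ` {x \<in> rotations. take (Suc k) x = z})
      = card {x \<in> rotations. take (Suc k) x = z}"
    by (rule card_image) (meson inj_rotate1 inj_on_subset subset_UNIV)
  ultimately have "occ S k z = card {y \<in> rotations. take k y = drop 1 z}"
    using occ_eq_card[OF z] by simp
  then show ?thesis
    using card_xint[of "drop 1 z"] z by simp
qed

lemma fusible_iff_unique_edge: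
  "fusible S k z \<longleftrightarrow> z \<in> dbg_edges S k \<and>
     {y. is_edge S k (take k z) y} = {drop 1 z} \<and> {x. is_edge S k x (drop 1 z)} = {take k z}"
  unfolding fusible_def is_edge_def by blast

lemma edge_of_is_edge:
  assumes "is_edge S k x y"
  shows "hd x # y \<in> dbg_edges S k" "take k (hd x # y) = x" "drop 1 (hd x # y) = y"
proof -
  obtain z where z: "z \<in> dbg_edges S k" "take k z = x" "drop 1 z = y"
    using assms by (auto simp: is_edge_def)
  have "z = hd x # y"
    using z k_ge_1 by (cases z; cases k) (auto simp: dbg_edges_def)
  then show "hd x # y \<in> dbg_edges S k" "take k (hd x # y) = x" "drop 1 (hd x # y) = y"
    using z by simp_all
qed

end

locale tunneling = de_bruijn +
  fixes r :: nat and p :: "nat \<Rightarrow> 'a list list" and I J :: "nat \<Rightarrow> nat"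
  assumes paths: "\<forall>l<r. distinct (p l) \<and> set (p l) \<subseteq> dbg_nodes S k"
    and paths_disjoint: "\<forall>l<r. \<forall>l'<r. l \<noteq> l' \<longrightarrow> set (p l) \<inter> set (p l') = {}"
    and paths_unary: "\<forall>l<r. \<forall>t. t + 1 < length (p l) \<longrightarrow>
           {y. is_edge S k (p l ! t) y} = {p l ! (t + 1)} \<and>
           {x. is_edge S k x (p l ! (t + 1))} = {p l ! t}"
    and fusible_on_paths: "\<forall>z. fusible S k z \<longrightarrow>
           (\<exists>l<r. \<exists>t. t + 1 < length (p l) \<and> take k z = p l ! t \<and> drop 1 z = p l ! (t + 1))"
    and intervals: "\<forall>l<r. {I l..J l} = xint S (last (p l))"
begin

definition path_steps :: "(nat \<times> nat) set" where
  "path_steps = (SIGMA l:{..<r}. {..<length (p l) - 1})"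

definition path_edge :: "nat \<times> nat \<Rightarrow> 'a list" where
  "path_edge = (\<lambda>(l, t). hd (p l ! t) # p l ! Suc t)"

definition tunneled :: "nat set" where
  "tunneled = {(LF S ^^ t) y | l t y. l < r \<and> I l < y \<and> y \<le> J l \<and> t < length (p l) - 1}"

lemma path_node_eq_iff:
  assumes "l < r" "s < length (p l)" "l' < r" "s' < length (p l')"
  shows "p l ! s = p l' ! s' \<longleftrightarrow> (l, s) = (l', s')"
proof (cases "l = l'")
  case True
  then show ?thesis
    using assms paths by (auto simp: nth_eq_iff_index_eq)
next
  case False
  have "p l ! s \<in> set (p l)" "p l' ! s' \<in> set (p l')"
    using assms by simp_all
  moreover have "set (p l) \<inter> set (p l') = {}"
    using paths_disjoint assms False by blast
  ultimately show ?thesis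
    using False by auto
qed

lemma length_path_node:
  assumes "l < r" "s < length (p l)"
  shows "length (p l ! s) = k"
proof -
  have "p l ! s \<in> take k ` rotations"
    using assms paths dbg_nodes_eq nth_mem by blast
  then show ?thesis
    using length_rotation k_less by auto
qed

lemma card_xint_path:
  assumes "l < r" "s < length (p l)"
  shows "card (xint S (p l ! s)) = Suc (J l) - I l"
  using assms(2)
proof (induction "length (p l) - 1 - s" arbitrary: s)
  case 0
  then have "s = length (p l) - 1" "p l \<noteq> []"
    by auto
  then have "xint S (p l ! s) = {I l..J l}"
    using intervals assms(1) by (simp add: last_conv_nth)
  then show ?case
    by simp
next
  case (Suc d)
  then have "card (xint S (p l ! s)) = card (xint S (p l ! Suc s))"
    using paths_unary assms(1) card_xint_unique_edge by simp
  also have "\<dots> = Suc (J l) - I l"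
    using Suc.hyps(1)[of "Suc s"] Suc.hyps(2) by simp
  finally show ?case .
qed

lemma LF_funpow_xint_path:
  assumes "l < r" "t < length (p l)" "i \<in> xint S (last (p l))"
  shows "(LF S ^^ t) i \<in> xint S (p l ! (length (p l) - 1 - t))"
  using assms(2)
proof (induction t)
  case 0
  then show ?case
    using assms(3) by (simp add: last_conv_nth)
next
  case (Suc t)
  define s where "s = length (p l) - 1 - Suc t"
  have "Suc s < length (p l)" "length (p l) - 1 - t = Suc s"
    using Suc.prems by (simp_all add: s_def)
  then have "LF S ` xint S (p l ! Suc s) \<subseteq> xint S (p l ! s)"
    using paths_unary assms(1) length_path_node
    by (intro LF_image_xint_unique_pred) (auto simp del: Suc_eq_plus1)
  moreover have "(LF S ^^ t) i \<in> xint S (p l ! Suc s)"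
    using Suc \<open>length (p l) - 1 - t = Suc s\<close> by simp
  ultimately show ?case
    by (auto simp: s_def)
qed

lemma LF_funpow_interval_subset:
  assumes "(l, t) \<in> path_steps"
  shows "(LF S ^^ t) ` {I l<..J l} \<subseteq> xint S (p l ! (length (p l) - 1 - t))"
proof -
  have "l < r"
    using assms by (simp add: path_steps_def)
  then have "xint S (last (p l)) = {I l..J l}"
    using intervals by simp
  moreover have "{I l<..J l} \<subseteq> {I l..J l}"
    by (intro subsetI) simp
  ultimately have "{I l<..J l} \<subseteq> xint S (last (p l))"
    by simp
  moreover have "t < length (p l)"
    using assms by (auto simp: path_steps_def)
  ultimately show ?thesis
    using LF_funpow_xint_path[OF \<open>l < r\<close>] by blast
qed

(* The block deleted for step (l, t) lies in the interval of the node x_{l, w_l - 1 - t}. *)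
lemma card_tunneled: "card tunneled = (\<Sum>(l, t) \<in> path_steps. J l - I l)"
proof -
  define G where "G = (\<lambda>(l, t). (LF S ^^ t) ` {I l<..J l})"
  have "tunneled = \<Union> (G ` path_steps)"
    by (auto simp: tunneled_def G_def path_steps_def; blast)
  moreover have "G a \<inter> G b = {}" if "a \<in> path_steps" "b \<in> path_steps" "a \<noteq> b" for a b
  proof -
    obtain l t l' t' where ab: "a = (l, t)" "b = (l', t')"
      by fastforce
    then have "p l ! (length (p l) - 1 - t) \<noteq> p l' ! (length (p l') - 1 - t')"
      using that path_node_eq_iff by (auto simp: path_steps_def)
    then have "xint S (p l ! (length (p l) - 1 - t)) \<inter> xint S (p l' ! (length (p l') - 1 - t')) = {}"
      using that ab length_path_node by (intro xint_disjoint) (auto simp: path_steps_def)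
    moreover have "G a \<subseteq> xint S (p l ! (length (p l) - 1 - t))"
      "G b \<subseteq> xint S (p l' ! (length (p l') - 1 - t'))"
      using LF_funpow_interval_subset that ab by (simp_all add: G_def)
    ultimately show ?thesis
      by blast
  qed
  moreover have "card (G (l, t)) = J l - I l" if "(l, t) \<in> path_steps" for l t
  proof -
    have "{I l<..J l} \<subseteq> {..<n}"
      using intervals xint_subset that by (fastforce simp: path_steps_def)
    then have "inj_on (LF S ^^ t) {I l<..J l}"
      using LF_funpow inj_on_subset by blast
    then show ?thesis
      by (simp add: G_def card_image)
  qed
  moreover have "finite path_steps" "\<forall>a \<in> path_steps. finite (G a)"
    by (auto simp: path_steps_def G_def)
  ultimately have "card tunneled = (\<Sum>a \<in> path_steps. card (G a))"
    by (simp add: card_UN_disjoint)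
  also have "\<dots> = (\<Sum>(l, t) \<in> path_steps. J l - I l)"
    using \<open>\<And>l t. (l, t) \<in> path_steps \<Longrightarrow> card (G (l, t)) = J l - I l\<close>
    by (intro sum.cong) auto
  finally show ?thesis .
qed

lemma tunneled_subset: "tunneled \<subseteq> {..<n}"
  using LF_funpow_interval_subset xint_subset by (fastforce simp: tunneled_def path_steps_def)

lemma
  assumes "(l, t) \<in> path_steps"
  shows path_edge_in_dbg_edges: "path_edge (l, t) \<in> dbg_edges S k"
    and take_path_edge: "take k (path_edge (l, t)) = p l ! t"
    and drop1_path_edge: "drop 1 (path_edge (l, t)) = p l ! Suc t"
proof -
  have "l < r" "Suc t < length (p l)"
    using assms by (auto simp: path_steps_def)
  then have "{y. is_edge S k (p l ! t) y} = {p l ! Suc t}"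
    using paths_unary by simp
  then have "is_edge S k (p l ! t) (p l ! Suc t)"
    by blast
  then show "path_edge (l, t) \<in> dbg_edges S k"
    "take k (path_edge (l, t)) = p l ! t" "drop 1 (path_edge (l, t)) = p l ! Suc t"
    using edge_of_is_edge by (simp_all add: path_edge_def)
qed

lemma fusible_edges_eq: "{z \<in> dbg_edges S k. fusible S k z} = path_edge ` path_steps"
proof
  show "{z \<in> dbg_edges S k. fusible S k z} \<subseteq> path_edge ` path_steps"
  proof
    fix z assume z: "z \<in> {z \<in> dbg_edges S k. fusible S k z}"
    then obtain l t where "l < r" "t + 1 < length (p l)" "take k z = p l ! t" "drop 1 z = p l ! (t + 1)"
      using fusible_on_paths by blast
    then have lt: "(l, t) \<in> path_steps" "take k z = p l ! t" "drop 1 z = p l ! Suc t"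
      by (auto simp: path_steps_def)
    have lengths: "length z = Suc k" "length (path_edge (l, t)) = Suc k"
      using z path_edge_in_dbg_edges[OF lt(1)] by (simp_all add: dbg_edges_def)
    have "z = path_edge (l, t)"
      by (rule eq_of_take_drop1[OF lengths k_ge_1]) (use lt take_path_edge[OF lt(1)] drop1_path_edge[OF lt(1)] in simp_all)
    then show "z \<in> path_edge ` path_steps"
      using lt(1) by blast
  qed
  show "path_edge ` path_steps \<subseteq> {z \<in> dbg_edges S k. fusible S k z}"
  proof
    fix z assume "z \<in> path_edge ` path_steps"
    then obtain l t where lt: "(l, t) \<in> path_steps" "z = path_edge (l, t)"
      by auto
    then have "l < r" "Suc t < length (p l)"
      by (auto simp: path_steps_def)
    then have "{y. is_edge S k (p l ! t) y} = {p l ! Suc t}" "{x. is_edge S k x (p l ! Suc t)} = {p l ! t}"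
      using paths_unary by simp_all
    then show "z \<in> {z \<in> dbg_edges S k. fusible S k z}"
      using path_edge_in_dbg_edges[OF lt(1)] take_path_edge[OF lt(1)] drop1_path_edge[OF lt(1)]
      unfolding lt(2) fusible_iff_unique_edge mem_Collect_eq by simp
  qed
qed

lemma inj_on_path_edge: "inj_on path_edge path_steps"
proof (rule inj_onI)
  fix a b assume "a \<in> path_steps" "b \<in> path_steps" "path_edge a = path_edge b"
  then show "a = b"
    using drop1_path_edge[of "fst a" "snd a"] drop1_path_edge[of "fst b" "snd b"] path_node_eq_iff
    by (auto simp: path_steps_def)
qed

lemma occ_path_edge:
  assumes "(l, t) \<in> path_steps"
  shows "occ S k (path_edge (l, t)) = Suc (J l) - I l"
proof -
  have "l < r" "Suc t < length (p l)"
    using assms by (auto simp: path_steps_def)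
  then have "{x. is_edge S k x (p l ! Suc t)} = {p l ! t}"
    using paths_unary by simp
  then have "occ S k (path_edge (l, t)) = card (xint S (drop 1 (path_edge (l, t))))"
    using path_edge_in_dbg_edges[OF assms] take_path_edge[OF assms] drop1_path_edge[OF assms]
    by (intro occ_unique_pred) auto
  then have "occ S k (path_edge (l, t)) = card (xint S (p l ! Suc t))"
    using drop1_path_edge[OF assms] by simp
  then show ?thesis
    using card_xint_path \<open>l < r\<close> \<open>Suc t < length (p l)\<close> by simp
qed

lemma fusible_excess: "(\<Sum>z \<in> {z \<in> dbg_edges S k. fusible S k z}. occ S k z - 1) = (\<Sum>(l, t) \<in> path_steps. J l - I l)"
  unfolding fusible_edges_eq
  by (subst sum.reindex[OF inj_on_path_edge]) (auto simp: occ_path_edge intro!: sum.cong)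

lemma length_tunneled_BWT: "length [BWT S i. i \<leftarrow> [0..<n], i \<notin> tunneled] = m_red S k"
proof -
  have "m_red S k + card tunneled = n"
    using m_red_add_fusible_excess by (simp only: fusible_excess card_tunneled)
  then show ?thesis
    using length_filter_upt_notin[OF tunneled_subset, of "BWT S"] by simp
qed

end

theorem mainTheorem9:
  fixes S :: "'a::linorder list" and k r :: nat
    and p :: "nat \<Rightarrow> 'a list list" and I J :: "nat \<Rightarrow> nat"
  assumes "length S \<ge> 2"
    and "\<forall>c. last S \<le> c"
    and "last S \<notin> set (butlast S)"
    and "1 \<le> k" and "k < length S"
    and "\<forall>l<r. length (p l) \<ge> 2 \<and> distinct (p l) \<and> set (p l) \<subseteq> dbg_nodes S k"
    and "\<forall>l<r. \<forall>l'<r. l \<noteq> l' \<longrightarrow> set (p l) \<inter> set (p l') = {}"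
    and "\<forall>l<r. \<forall>t. t + 1 < length (p l) \<longrightarrow>
           {y. is_edge S k (p l ! t) y} = {p l ! (t + 1)} \<and>
           {x. is_edge S k x (p l ! (t + 1))} = {p l ! t}"
    and "\<forall>z. fusible S k z \<longrightarrow>
           (\<exists>l<r. \<exists>t. t + 1 < length (p l) \<and> take k z = p l ! t \<and> drop 1 z = p l ! (t + 1))"
    and "\<forall>l<r. {I l..J l} = xint S (last (p l))"
  shows "length [BWT S i. i \<leftarrow> [0..<length S],
            i \<notin> {(LF S ^^ t) y | l t y. l < r \<and> I l < y \<and> y \<le> J l \<and> t < length (p l) - 1}]
         = m_red S k"
proof -
  interpret tunneling S k r p I J
    using assms by unfold_locales auto
  show ?thesis
    using length_tunneled_BWT unfolding tunneled_def .
qed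

end
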